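(* Suppose given a pullback square of topological spaces with $C=A\times_BD$, maps $C\to A$, $r\colon C\to D$, $l\colon A\to B$ and $b\colon D\to B$, in which $r$ and $b$ are Serre fibrations and $b$ is surjective. Then $l$ is a Serre fibration. *)

theory Defs
  imports "HOL-Analysis.Analysis"
begin

definition cube :: "nat \<Rightarrow> (nat \<Rightarrow> real) topology" where
  "cube n = product_topology (\<lambda>i. top_of_set {0..1::real}) {..<n}"

definition serre_fibration :: "'e topology \<Rightarrow> 'b topology \<Rightarrow> ('e \<Rightarrow> 'b) \<Rightarrow> bool" where
  "serre_fibration E B p \<longleftrightarrow>
     continuous_map E B p \<and>
     (\<forall>n f H. continuous_map (cube n) E f \<and>
        continuous_map (prod_topology (cube n) (top_of_set {0..1::real})) B H \<and>
        (\<forall>x\<in>topspace (cube n). H (x, 0) = p (f x)) \<longrightarrow>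
        (\<exists>H'. continuous_map (prod_topology (cube n) (top_of_set {0..1::real})) E H' \<and>
           (\<forall>x\<in>topspace (cube n). H' (x, 0) = f x) \<and>
           (\<forall>z\<in>topspace (prod_topology (cube n) (top_of_set {0..1::real})). p (H' z) = H z)))"

definition fibre_product :: "'a topology \<Rightarrow> 'd topology \<Rightarrow> ('a \<Rightarrow> 'b) \<Rightarrow> ('d \<Rightarrow> 'b) \<Rightarrow> ('a \<times> 'd) topology" where
  "fibre_product A D l b =
     subtopology (prod_topology A D) {(x, y). x \<in> topspace A \<and> y \<in> topspace D \<and> l x = b y}"

end

theory Submission
  imports Defs
begin

text \<open>Given f : [0,1]^n \<rightarrow> A and a homotopy H of l \<circ> f in B, first lift l \<circ> f to some
  g : [0,1]^n \<rightarrow> D; this is possible because the cube is contractible and b is a surjective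
  Serre fibration. Then (f, g) lands in the fibre product C. Lift H through b to a homotopy
  of g, lift that through r = snd to a homotopy of (f, g) in C, and take its first component.\<close>

lemma serre_fibrationD:
  assumes "serre_fibration E B p"
    and "continuous_map (cube n) E f"
    and "continuous_map (prod_topology (cube n) (top_of_set {0..1::real})) B H"
    and "\<And>x. x \<in> topspace (cube n) \<Longrightarrow> H (x, 0) = p (f x)"
  obtains H' where "continuous_map (prod_topology (cube n) (top_of_set {0..1::real})) E H'"
    and "\<And>x. x \<in> topspace (cube n) \<Longrightarrow> H' (x, 0) = f x"
    and "\<And>z. z \<in> topspace (prod_topology (cube n) (top_of_set {0..1::real})) \<Longrightarrow> p (H' z) = H z"
  using assms unfolding serre_fibration_def by metis

lemma topspace_cube: "topspace (cube n) = PiE {..<n} (\<lambda>i. {0..1::real})"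
  by (simp add: cube_def)

lemma continuous_map_cube_scale:
  "continuous_map (prod_topology (cube n) (top_of_set {0..1::real})) (cube n)
     (\<lambda>(x, t). restrict (\<lambda>i. t * x i) {..<n})"
  unfolding cube_def
proof (subst continuous_map_componentwise, intro conjI ballI)
  let ?X = "prod_topology (product_topology (\<lambda>i. top_of_set {0..1::real}) {..<n})
                          (top_of_set {0..1::real})"
  show "(\<lambda>(x, t). restrict (\<lambda>i. t * x i) {..<n}) ` topspace ?X \<subseteq> extensional {..<n}"
    by (auto simp: case_prod_beta)
  fix k assume k: "k \<in> {..<n}"
  have "continuous_map ?X (top_of_set {0..1}) ((\<lambda>x. x k) \<circ> fst)"
    by (rule continuous_map_compose[OF continuous_map_fst continuous_map_product_projection[OF k]])
  then have "continuous_map ?X euclideanreal (\<lambda>z. fst z k)"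
    unfolding o_def by (rule continuous_map_into_fulltopology)
  moreover have "continuous_map ?X euclideanreal snd"
    by (rule continuous_map_into_fulltopology[OF continuous_map_snd])
  ultimately have cont: "continuous_map ?X euclideanreal (\<lambda>z. snd z * fst z k)"
    by (rule continuous_map_real_mult[rotated])
  have range: "snd z * fst z k \<in> {0..1}" if "z \<in> topspace ?X" for z
  proof -
    have "fst z k \<in> {0..1}" "snd z \<in> {0..1}"
      using that k by (simp_all add: topspace_prod_topology mem_Times_iff PiE_iff)
    then show ?thesis by (simp add: mult_le_one)
  qed
  have component: "(\<lambda>z. ((\<lambda>(x, t). restrict (\<lambda>i. t * x i) {..<n}) z) k) = (\<lambda>z. snd z * fst z k)"
    using k by (simp add: fun_eq_iff)
  show "continuous_map ?X (top_of_set {0..1})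
     (\<lambda>z. ((\<lambda>(x, t). restrict (\<lambda>i. t * x i) {..<n}) z) k)"
    unfolding component continuous_map_in_subtopology using cont range by blast
qed

text \<open>Every map from a cube lifts: contract the cube to its origin, lift the resulting homotopy
  from the constant map at a preimage of the origin's image, and evaluate at time 1.\<close>

lemma serre_fibration_lift_cube:
  assumes p: "serre_fibration E B p" and surj: "p ` topspace E = topspace B"
    and g: "continuous_map (cube n) B g"
  obtains g' where "continuous_map (cube n) E g'"
    and "\<And>x. x \<in> topspace (cube n) \<Longrightarrow> p (g' x) = g x"
proof -
  define origin :: "nat \<Rightarrow> real" where "origin = restrict (\<lambda>_. 0) {..<n}"
  have "origin \<in> topspace (cube n)"
    by (simp add: origin_def topspace_cube)
  then have "g origin \<in> p ` topspace E"
    using g surj continuous_map_funspace by blast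
  then obtain e where e: "e \<in> topspace E" "p e = g origin"
    by auto
  define H where "H = g \<circ> (\<lambda>(x, t). restrict (\<lambda>i. t * x i) {..<n})"
  have "continuous_map (prod_topology (cube n) (top_of_set {0..1::real})) B H"
    unfolding H_def using continuous_map_compose[OF continuous_map_cube_scale g] .
  moreover have "H (x, 0) = p e" for x
    by (simp add: H_def e origin_def)
  moreover have "continuous_map (cube n) E (\<lambda>_. e)"
    using e(1) by simp
  ultimately obtain H' where
    H': "continuous_map (prod_topology (cube n) (top_of_set {0..1::real})) E H'"
        "\<And>z. z \<in> topspace (prod_topology (cube n) (top_of_set {0..1::real})) \<Longrightarrow> p (H' z) = H z"
    using serre_fibrationD[OF p] by metis
  show ?thesis
  proof
    show "continuous_map (cube n) E (\<lambda>x. H' (x, 1))"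
      using continuous_map_compose[OF _ H'(1), of "cube n" "\<lambda>x. (x, 1)"]
      by (simp add: o_def continuous_map_paired)
    fix x assume x: "x \<in> topspace (cube n)"
    then have "restrict (\<lambda>i. 1 * x i) {..<n} = x"
      by (simp add: topspace_cube)
    with x H'(2)[of "(x, 1)"] show "p (H' (x, 1)) = g x"
      by (simp add: H_def)
  qed
qed

lemma fibre_product_commutes:
  assumes "z \<in> topspace (fibre_product A D l b)"
  shows "l (fst z) = b (snd z)"
  using assms by (auto simp: fibre_product_def)

lemma continuous_map_fst_fibre_product:
  "continuous_map (fibre_product A D l b) A fst"
  unfolding fibre_product_def by (rule continuous_map_from_subtopology[OF continuous_map_fst])

lemma continuous_map_into_fibre_product:
  assumes f: "continuous_map X A f" and g: "continuous_map X D g"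
    and commutes: "\<And>x. x \<in> topspace X \<Longrightarrow> l (f x) = b (g x)"
  shows "continuous_map X (fibre_product A D l b) (\<lambda>x. (f x, g x))"
  unfolding fibre_product_def continuous_map_in_subtopology
proof
  show "continuous_map X (prod_topology A D) (\<lambda>x. (f x, g x))"
    using f g by (simp add: continuous_map_paired)
  show "(\<lambda>x. (f x, g x)) \<in> topspace X \<rightarrow> {(x, y). x \<in> topspace A \<and> y \<in> topspace D \<and> l x = b y}"
    using continuous_map_funspace[OF f] continuous_map_funspace[OF g] commutes by auto
qed

lemma fibre_product_lift_homotopy:
  assumes r: "serre_fibration (fibre_product A D l b) D snd" and b: "serre_fibration D B b"
    and f: "continuous_map (cube n) A f" and g: "continuous_map (cube n) D g"
    and gf: "\<And>x. x \<in> topspace (cube n) \<Longrightarrow> b (g x) = l (f x)"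
    and H: "continuous_map (prod_topology (cube n) (top_of_set {0..1::real})) B H"
    and H0: "\<And>x. x \<in> topspace (cube n) \<Longrightarrow> H (x, 0) = l (f x)"
  obtains H' where "continuous_map (prod_topology (cube n) (top_of_set {0..1::real})) A H'"
    and "\<And>x. x \<in> topspace (cube n) \<Longrightarrow> H' (x, 0) = f x"
    and "\<And>z. z \<in> topspace (prod_topology (cube n) (top_of_set {0..1::real})) \<Longrightarrow> l (H' z) = H z"
proof -
  let ?P = "prod_topology (cube n) (top_of_set {0..1::real})"
  have "H (x, 0) = b (g x)" if "x \<in> topspace (cube n)" for x
    using that by (simp add: H0 gf)
  then obtain G where G: "continuous_map ?P D G"
    and G0: "\<And>x. x \<in> topspace (cube n) \<Longrightarrow> G (x, 0) = g x"
    and GH: "\<And>z. z \<in> topspace ?P \<Longrightarrow> b (G z) = H z"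
    using serre_fibrationD[OF b g H] by blast
  have fg: "continuous_map (cube n) (fibre_product A D l b) (\<lambda>x. (f x, g x))"
    by (rule continuous_map_into_fibre_product[OF f g]) (simp add: gf)
  have "G (x, 0) = snd (f x, g x)" if "x \<in> topspace (cube n)" for x
    using that by (simp add: G0)
  then obtain K where K: "continuous_map ?P (fibre_product A D l b) K"
    and K0: "\<And>x. x \<in> topspace (cube n) \<Longrightarrow> K (x, 0) = (f x, g x)"
    and KG: "\<And>z. z \<in> topspace ?P \<Longrightarrow> snd (K z) = G z"
    using serre_fibrationD[OF r fg G] by blast
  show ?thesis
  proof
    show "continuous_map ?P A (fst \<circ> K)"
      using K continuous_map_fst_fibre_product by (rule continuous_map_compose)
    show "(fst \<circ> K) (x, 0) = f x" if "x \<in> topspace (cube n)" for x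
      using that by (simp add: K0)
    fix z assume z: "z \<in> topspace ?P"
    then have "K z \<in> topspace (fibre_product A D l b)"
      using K continuous_map_funspace by blast
    then have "l (fst (K z)) = b (snd (K z))"
      by (rule fibre_product_commutes)
    also have "\<dots> = H z"
      using z by (simp add: KG GH)
    finally show "l ((fst \<circ> K) z) = H z"
      by simp
  qed
qed

theorem lemma4p18:
  fixes A :: "'a topology" and B :: "'b topology" and D :: "'d topology"
    and l :: "'a \<Rightarrow> 'b" and b :: "'d \<Rightarrow> 'b"
  assumes "continuous_map A B l"
    and "continuous_map D B b"
    and "serre_fibration (fibre_product A D l b) D snd"
    and "serre_fibration D B b"
    and "b ` topspace D = topspace B"
  shows "serre_fibration A B l"
  unfolding serre_fibration_def
proof (intro conjI allI impI)
  fix n f H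
  assume "continuous_map (cube n) A f \<and>
          continuous_map (prod_topology (cube n) (top_of_set {0..1::real})) B H \<and>
          (\<forall>x\<in>topspace (cube n). H (x, 0) = l (f x))"
  then have f: "continuous_map (cube n) A f"
    and H: "continuous_map (prod_topology (cube n) (top_of_set {0..1::real})) B H"
    and H0: "\<And>x. x \<in> topspace (cube n) \<Longrightarrow> H (x, 0) = l (f x)"
    by auto
  obtain g where "continuous_map (cube n) D g" "\<And>x. x \<in> topspace (cube n) \<Longrightarrow> b (g x) = l (f x)"
    using serre_fibration_lift_cube[OF assms(4,5) continuous_map_compose[OF f assms(1)]]
    by (auto simp: o_def)
  from fibre_product_lift_homotopy[OF assms(3,4) f this H H0]
  show "\<exists>H'. continuous_map (prod_topology (cube n) (top_of_set {0..1::real})) A H' \<and>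
           (\<forall>x\<in>topspace (cube n). H' (x, 0) = f x) \<and>
           (\<forall>z\<in>topspace (prod_topology (cube n) (top_of_set {0..1::real})). l (H' z) = H z)"
    by metis
qed (fact assms(1))

end
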